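(* For every $\Gamma\cup\{\varphi\}\subseteq{\bf F}(\Sigma,\mathcal{V})$: $\Gamma\vdash_{C_1}\varphi$ iff $\Gamma\vDash^{\mathsf{RN}}_{\mathcal{RM}_{C_1}}\varphi$.
   Context: $\Sigma$ has unary $\neg$ and binary $\wedge,\vee,\to$; ${\bf F}(\Sigma,\mathcal{V})$ its formulas over a denumerable set $\mathcal{V}$ of variables. Abbreviations: $\alpha^0=\alpha$, $\alpha^{k+1}=\neg(\alpha^k\wedge\neg\alpha^k)$; $\alpha^{(1)}=\alpha^1$, $\alpha^{(k+1)}=\alpha^{(k)}\wedge\alpha^{k+1}$. For $n\ge1$, $C_n$ is the Hilbert calculus with Modus Ponens and axiom schemata: $\alpha\to(\beta\to\alpha)$; $(\alpha\to(\beta\to\gamma))\to((\alpha\to\beta)\to(\alpha\to\gamma))$; $\alpha\to(\beta\to(\alpha\wedge\beta))$; $(\alpha\wedge\beta)\to\alpha$; $(\alpha\wedge\beta)\to\beta$; $\alpha\to(\alpha\vee\beta)$; $\beta\to(\alpha\vee\beta)$; $(\alpha\to\gamma)\to((\beta\to\gamma)\to((\alpha\vee\beta)\to\gamma))$; $\alpha\vee\neg\alpha$; $\neg\neg\alpha\to\alpha$; (bc$_n$) $\alpha^{(n)}\to(\alpha\to(\neg\alpha\to\beta))$; (P$_n$) $(\alpha^{(n)}\wedge\beta^{(n)})\to((\alpha\wedge\beta)^{(n)}\wedge(\alpha\vee\beta)^{(n)}\wedge(\alpha\to\beta)^{(n)})$. $\mathcal{A}_{C_1}$ is the $\Sigma$-multialgebra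 with universe $\{F,t,T\}$, $D=\{t,T\}$, and: $F\tilde\vee F=\{F\}$, $F\tilde\vee T=T\tilde\vee F=T\tilde\vee T=\{T\}$, $x\tilde\vee y=D$ whenever $t\in\{x,y\}$; $x\tilde\wedge y=\{F\}$ if $F\in\{x,y\}$, $T\tilde\wedge T=\{T\}$, $t\tilde\wedge t=t\tilde\wedge T=T\tilde\wedge t=D$; $\tilde\neg F=\{T\}$, $\tilde\neg t=D$, $\tilde\neg T=\{F\}$; $F\tilde\to F=F\tilde\to T=T\tilde\to T=\{T\}$, $t\tilde\to F=T\tilde\to F=\{F\}$, $x\tilde\to t=D$ for all $x$, $t\tilde\to T=D$. A valuation is a map $\nu$ with $\nu(\neg\alpha)\in\tilde\neg\nu(\alpha)$ and $\nu(\alpha\#\beta)\in\nu(\alpha)\tilde\#\nu(\beta)$. $\mathcal{F}_{C_1}$ is the set of valuations with $\nu(\alpha)=t\Rightarrow\nu(\alpha\wedge\neg\alpha)=T$ for all $\alpha$. $\mathcal{RM}_{C_1}=(\mathcal{A}_{C_1},D,\mathcal{F}_{C_1})$; $\Gamma\vDash^{\mathsf{RN}}_{\mathcal{RM}_{C_1}}\varphi$ iff every $\nu\in\mathcal{F}_{C_1}$ with $\nu[\Gamma]\subseteq D$ has $\nu(\varphi)\in D$. *)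

theory Defs
  imports Main
begin

datatype fm =
    Var nat
  | Neg fm
  | Conj fm fm
  | Disj fm fm
  | Imp fm fm

fun circ :: "fm \<Rightarrow> nat \<Rightarrow> fm" where
  "circ a 0 = a"
| "circ a (Suc k) = Neg (Conj (circ a k) (Neg (circ a k)))"

text \<open>alpha^(1) = alpha^1, alpha^(k+1) = alpha^(k) and alpha^(k+1); we only use n >= 1.\<close>
fun wcirc :: "fm \<Rightarrow> nat \<Rightarrow> fm" where
  "wcirc a 0 = circ a 1"
| "wcirc a (Suc 0) = circ a 1"
| "wcirc a (Suc (Suc k)) = Conj (wcirc a (Suc k)) (circ a (Suc (Suc k)))"

inductive axiom_Cn :: "nat \<Rightarrow> fm \<Rightarrow> bool" for n :: nat where
  Ax1: "axiom_Cn n (Imp a (Imp b a))"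
| Ax2: "axiom_Cn n (Imp (Imp a (Imp b c)) (Imp (Imp a b) (Imp a c)))"
| Ax3: "axiom_Cn n (Imp a (Imp b (Conj a b)))"
| Ax4: "axiom_Cn n (Imp (Conj a b) a)"
| Ax5: "axiom_Cn n (Imp (Conj a b) b)"
| Ax6: "axiom_Cn n (Imp a (Disj a b))"
| Ax7: "axiom_Cn n (Imp b (Disj a b))"
| Ax8: "axiom_Cn n (Imp (Imp a c) (Imp (Imp b c) (Imp (Disj a b) c)))"
| Ax9: "axiom_Cn n (Disj a (Neg a))"
| Ax10: "axiom_Cn n (Imp (Neg (Neg a)) a)"
| bc: "axiom_Cn n (Imp (wcirc a n) (Imp a (Imp (Neg a) b)))"
| P: "axiom_Cn n (Imp (Conj (wcirc a n) (wcirc b n))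
        (Conj (Conj (wcirc (Conj a b) n) (wcirc (Disj a b) n)) (wcirc (Imp a b) n)))"

inductive derives_Cn :: "nat \<Rightarrow> fm set \<Rightarrow> fm \<Rightarrow> bool" for n :: nat and \<Gamma> :: "fm set" where
  Hyp: "a \<in> \<Gamma> \<Longrightarrow> derives_Cn n \<Gamma> a"
| Ax: "axiom_Cn n a \<Longrightarrow> derives_Cn n \<Gamma> a"
| MP: "derives_Cn n \<Gamma> a \<Longrightarrow> derives_Cn n \<Gamma> (Imp a b) \<Longrightarrow> derives_Cn n \<Gamma> b"

datatype tv = F | t | T

definition D :: "tv set" where "D = {t, T}"

definition mneg :: "tv \<Rightarrow> tv set" where
  "mneg x = (case x of F \<Rightarrow> {T} | t \<Rightarrow> D | T \<Rightarrow> {F})"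

definition mdisj :: "tv \<Rightarrow> tv \<Rightarrow> tv set" where
  "mdisj x y = (if x = t \<or> y = t then D
               else if x = F \<and> y = F then {F} else {T})"

definition mconj :: "tv \<Rightarrow> tv \<Rightarrow> tv set" where
  "mconj x y = (if x = F \<or> y = F then {F}
               else if x = T \<and> y = T then {T} else D)"

definition mimp :: "tv \<Rightarrow> tv \<Rightarrow> tv set" where
  "mimp x y = (if y = t then D
              else if y = F then (if x = F then {T} else {F})
              else (if x = t then D else {T}))"

definition valuation :: "(fm \<Rightarrow> tv) \<Rightarrow> bool" where
  "valuation v \<longleftrightarrow>
     (\<forall>a. v (Neg a) \<in> mneg (v a)) \<and>
     (\<forall>a b. v (Conj a b) \<in> mconj (v a) (v b)) \<and>
     (\<forall>a b. v (Disj a b) \<in> mdisj (v a) (v b)) \<and>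
     (\<forall>a b. v (Imp a b) \<in> mimp (v a) (v b))"

definition F_C1 :: "(fm \<Rightarrow> tv) set" where
  "F_C1 = {v. valuation v \<and> (\<forall>a. v a = t \<longrightarrow> v (Conj a (Neg a)) = T)}"

definition RN_conseq :: "fm set \<Rightarrow> fm \<Rightarrow> bool" where
  "RN_conseq \<Gamma> \<phi> \<longleftrightarrow> (\<forall>v \<in> F_C1. v ` \<Gamma> \<subseteq> D \<longrightarrow> v \<phi> \<in> D)"

end

theory Submission
  imports Defs
begin

text \<open>Each multioperation of \<open>\<A>\<^sub>C\<^sub>1\<close> is classical on designated values, and its only
  further constraint is that it never produces \<open>t\<close> from non-\<open>t\<close> arguments. In \<open>F_C1\<close> the
  formula \<open>\<not>(\<alpha> \<and> \<not>\<alpha>)\<close> is designated exactly when \<open>\<alpha>\<close> is not valued \<open>t\<close>, so the axioms \<open>(bc\<^sub>1)\<close>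
  and \<open>(P\<^sub>1)\<close> express precisely these two facts, which gives soundness. For completeness,
  a set \<open>\<Delta>\<close> maximal among those not deriving \<open>\<phi>\<close> behaves classically for the positive
  connectives, and valuing a formula \<open>F\<close>, \<open>t\<close> or \<open>T\<close> according to whether it is outside
  \<open>\<Delta>\<close>, in \<open>\<Delta>\<close> together with its negation, or in \<open>\<Delta>\<close> alone yields a valuation in
  \<open>F_C1\<close> refuting \<open>\<Gamma> \<turnstile> \<phi>\<close>.\<close>

lemma wcirc_one [simp]: "wcirc a 1 = Neg (Conj a (Neg a))"
  by (simp add: One_nat_def)

lemma in_D_iff: "x \<in> D \<longleftrightarrow> x \<noteq> F"
  by (cases x) (auto simp: D_def)

lemma mem_mneg_iff:
  "z \<in> mneg x \<longleftrightarrow> (x = F \<longrightarrow> z = T) \<and> (x = T \<longrightarrow> z = F) \<and> (x = t \<longrightarrow> z \<noteq> F)"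
  by (cases x; cases z) (auto simp: mneg_def D_def)

lemma mem_mconj_iff:
  "z \<in> mconj x y \<longleftrightarrow> (z \<noteq> F \<longleftrightarrow> x \<noteq> F \<and> y \<noteq> F) \<and> (x \<noteq> t \<and> y \<noteq> t \<longrightarrow> z \<noteq> t)"
  by (cases x; cases y; cases z) (auto simp: mconj_def D_def)

lemma mem_mdisj_iff:
  "z \<in> mdisj x y \<longleftrightarrow> (z \<noteq> F \<longleftrightarrow> x \<noteq> F \<or> y \<noteq> F) \<and> (x \<noteq> t \<and> y \<noteq> t \<longrightarrow> z \<noteq> t)"
  by (cases x; cases y; cases z) (auto simp: mdisj_def D_def)

lemma mem_mimp_iff:
  "z \<in> mimp x y \<longleftrightarrow> (z \<noteq> F \<longleftrightarrow> x = F \<or> y \<noteq> F) \<and> (x \<noteq> t \<and> y \<noteq> t \<longrightarrow> z \<noteq> t)"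
  by (cases x; cases y; cases z) (auto simp: mimp_def D_def)

lemmas mem_multiop_iffs = mem_mneg_iff mem_mconj_iff mem_mdisj_iff mem_mimp_iff

lemma valuation_Neg:
  assumes "valuation v"
  shows "v a = F \<Longrightarrow> v (Neg a) = T" and "v a = T \<Longrightarrow> v (Neg a) = F"
  using assms by (auto simp: valuation_def mem_mneg_iff)

lemma valuation_designated_iff:
  assumes "valuation v"
  shows "v (Conj a b) \<noteq> F \<longleftrightarrow> v a \<noteq> F \<and> v b \<noteq> F"
    and "v (Disj a b) \<noteq> F \<longleftrightarrow> v a \<noteq> F \<or> v b \<noteq> F"
    and "v (Imp a b) \<noteq> F \<longleftrightarrow> v a = F \<or> v b \<noteq> F"
  using assms by (simp_all add: valuation_def mem_multiop_iffs)

lemma valuation_binary_not_t: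
  assumes "valuation v" "v a \<noteq> t" "v b \<noteq> t"
  shows "v (Conj a b) \<noteq> t \<and> v (Disj a b) \<noteq> t \<and> v (Imp a b) \<noteq> t"
  using assms by (simp add: valuation_def mem_multiop_iffs)

lemma F_C1_consistency_designated_iff:
  assumes "v \<in> F_C1"
  shows "v (Neg (Conj a (Neg a))) \<noteq> F \<longleftrightarrow> v a \<noteq> t"
proof -
  have val: "valuation v" and restr: "v a = t \<Longrightarrow> v (Conj a (Neg a)) = T"
    using assms by (auto simp: F_C1_def)
  have "v (Conj a (Neg a)) \<in> mconj (v a) (v (Neg a))" "v (Neg a) \<in> mneg (v a)"
       "v (Neg (Conj a (Neg a))) \<in> mneg (v (Conj a (Neg a)))"
    using val by (simp_all add: valuation_def)
  with restr show ?thesis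
    by (cases "v a"; cases "v (Neg a)") (auto simp: mem_multiop_iffs)
qed

lemma axiom_C1_designated:
  assumes "axiom_Cn 1 a" "v \<in> F_C1"
  shows "v a \<noteq> F"
proof -
  have val: "valuation v" using assms(2) by (simp add: F_C1_def)
  note designated = valuation_designated_iff[OF val]
    and consistency = F_C1_consistency_designated_iff[OF assms(2)]
  from assms(1) show ?thesis
  proof (induction rule: axiom_Cn.induct)
    case (Ax9 a)
    show ?case using valuation_Neg(1)[OF val, of a] by (auto simp: designated)
  next
    case (Ax10 a)
    show ?case using valuation_Neg[OF val, of a] valuation_Neg(2)[OF val, of "Neg a"]
      by (cases "v a") (auto simp: designated)
  next
    case (bc a b)
    show ?case using valuation_Neg(2)[OF val, of a]
      by (cases "v a") (auto simp: designated consistency)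
  next
    case (P a b)
    show ?case using valuation_binary_not_t[OF val, of a b]
      by (auto simp: designated consistency)
  qed (auto simp: designated)
qed

theorem derives_C1_sound:
  assumes "derives_Cn 1 \<Gamma> \<phi>" "v \<in> F_C1" "v ` \<Gamma> \<subseteq> D"
  shows "v \<phi> \<in> D"
  using assms(1)
proof (induction rule: derives_Cn.induct)
  case (Hyp a) then show ?case using assms(3) by auto
next
  case (Ax a) then show ?case using axiom_C1_designated assms(2) by (simp add: in_D_iff)
next
  case (MP a b)
  then show ?case
    using valuation_designated_iff(3) assms(2) by (auto simp: in_D_iff F_C1_def)
qed

lemma derives_Cn_mono: "derives_Cn n \<Gamma> a \<Longrightarrow> \<Gamma> \<subseteq> \<Gamma>' \<Longrightarrow> derives_Cn n \<Gamma>' a"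
  by (induction rule: derives_Cn.induct) (auto intro: derives_Cn.intros)

lemma derives_Cn_finite_premises:
  "derives_Cn n \<Gamma> a \<Longrightarrow> \<exists>\<Gamma>'. finite \<Gamma>' \<and> \<Gamma>' \<subseteq> \<Gamma> \<and> derives_Cn n \<Gamma>' a"
proof (induction rule: derives_Cn.induct)
  case (Hyp a) then show ?case by (intro exI[of _ "{a}"]) (auto intro: derives_Cn.Hyp)
next
  case (Ax a) then show ?case by (intro exI[of _ "{}"]) (auto intro: derives_Cn.Ax)
next
  case (MP a b)
  then obtain G1 G2 where "finite G1" "G1 \<subseteq> \<Gamma>" "derives_Cn n G1 a"
     "finite G2" "G2 \<subseteq> \<Gamma>" "derives_Cn n G2 (Imp a b)" by blast
  then show ?case
    by (intro exI[of _ "G1 \<union> G2"]) (auto intro: derives_Cn.MP derives_Cn_mono)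
qed

lemma derives_Cn_Imp_refl: "derives_Cn n \<Gamma> (Imp a a)"
proof -
  have "derives_Cn n \<Gamma> (Imp (Imp a (Imp (Imp a a) a)) (Imp (Imp a (Imp a a)) (Imp a a)))"
       "derives_Cn n \<Gamma> (Imp a (Imp (Imp a a) a))" "derives_Cn n \<Gamma> (Imp a (Imp a a))"
    by (auto intro: derives_Cn.Ax axiom_Cn.intros)
  then show ?thesis by (meson derives_Cn.MP)
qed

theorem derives_Cn_deduction:
  "derives_Cn n (insert a \<Gamma>) b \<Longrightarrow> derives_Cn n \<Gamma> (Imp a b)"
proof (induction rule: derives_Cn.induct)
  case (Hyp c)
  then show ?case
    by (metis derives_Cn_Imp_refl Ax1 derives_Cn.Ax derives_Cn.Hyp derives_Cn.MP insertE)
next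
  case (Ax c) then show ?case by (meson Ax1 derives_Cn.Ax derives_Cn.MP)
next
  case (MP c d) then show ?case by (meson Ax2 derives_Cn.Ax derives_Cn.MP)
qed

lemma derives_Cn_DisjE:
  assumes "derives_Cn n \<Gamma> (Disj a b)"
    and "derives_Cn n (insert a \<Gamma>) c" "derives_Cn n (insert b \<Gamma>) c"
  shows "derives_Cn n \<Gamma> c"
proof -
  have "derives_Cn n \<Gamma> (Imp (Imp a c) (Imp (Imp b c) (Imp (Disj a b) c)))"
    by (intro derives_Cn.Ax Ax8)
  then show ?thesis using assms derives_Cn_deduction derives_Cn.MP by metis
qed

text \<open>Case split on \<open>\<alpha> \<or> \<not>\<alpha>\<close>; if \<open>\<not>\<alpha>\<close> holds, split again on \<open>(\<alpha> \<and> \<not>\<alpha>) \<or> \<alpha>\<^sup>1\<close>: the first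
  disjunct yields \<open>\<alpha>\<close>, while \<open>\<alpha>\<^sup>1\<close> together with \<open>\<not>\<alpha>\<close> makes \<open>\<alpha>\<close> explosive by \<open>(bc\<^sub>1)\<close>,
  hence \<open>\<alpha> \<rightarrow> \<beta>\<close>.\<close>
lemma derives_C1_Disj_Imp: "derives_Cn 1 \<Gamma> (Disj a (Imp a b))"
proof (rule derives_Cn_DisjE[where a = a and b = "Neg a"])
  let ?goal = "Disj a (Imp a b)"
  have left: "derives_Cn 1 G ?goal" if "derives_Cn 1 G a" for G
    using that by (meson Ax6 derives_Cn.Ax derives_Cn.MP)
  have right: "derives_Cn 1 G ?goal" if "derives_Cn 1 G (Imp a b)" for G
    using that by (meson Ax7 derives_Cn.Ax derives_Cn.MP)
  show "derives_Cn 1 \<Gamma> (Disj a (Neg a))" by (intro derives_Cn.Ax Ax9)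
  show "derives_Cn 1 (insert a \<Gamma>) ?goal" by (intro left derives_Cn.Hyp) simp
  show "derives_Cn 1 (insert (Neg a) \<Gamma>) ?goal"
  proof (rule derives_Cn_DisjE[where a = "Conj a (Neg a)" and b = "Neg (Conj a (Neg a))"])
    show "derives_Cn 1 (insert (Neg a) \<Gamma>) (Disj (Conj a (Neg a)) (Neg (Conj a (Neg a))))"
      by (intro derives_Cn.Ax Ax9)
    show "derives_Cn 1 (insert (Conj a (Neg a)) (insert (Neg a) \<Gamma>)) ?goal"
      by (intro left) (meson Ax4 derives_Cn.Ax derives_Cn.Hyp derives_Cn.MP insertI1)
    let ?H = "insert a (insert (Neg (Conj a (Neg a))) (insert (Neg a) \<Gamma>))"
    have "derives_Cn 1 ?H (Imp (wcirc a 1) (Imp a (Imp (Neg a) b)))"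
      by (intro derives_Cn.Ax bc)
    moreover have "derives_Cn 1 ?H c" if "c \<in> ?H" for c
      using that by (rule derives_Cn.Hyp)
    ultimately have "derives_Cn 1 ?H b"
      by (simp only: wcirc_one) (meson derives_Cn.MP insertI1 insertI2)
    then show "derives_Cn 1 (insert (Neg (Conj a (Neg a))) (insert (Neg a) \<Gamma>)) ?goal"
      by (intro right derives_Cn_deduction)
  qed
qed

locale saturated =
  fixes \<Delta> :: "fm set" and \<phi> :: fm
  assumes not_derives: "\<not> derives_Cn 1 \<Delta> \<phi>"
    and maximal: "\<And>\<psi>. \<psi> \<notin> \<Delta> \<Longrightarrow> derives_Cn 1 (insert \<psi> \<Delta>) \<phi>"
begin

lemma derives_mem: "derives_Cn 1 \<Delta> \<psi> \<Longrightarrow> \<psi> \<in> \<Delta>"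
  using maximal not_derives derives_Cn_deduction derives_Cn.MP by blast

lemma MP_mem: "a \<in> \<Delta> \<Longrightarrow> Imp a b \<in> \<Delta> \<Longrightarrow> b \<in> \<Delta>"
  by (meson derives_mem derives_Cn.Hyp derives_Cn.MP)

lemma axiom_mem: "axiom_Cn 1 a \<Longrightarrow> a \<in> \<Delta>"
  by (intro derives_mem derives_Cn.Ax)

lemma Conj_mem_iff: "Conj a b \<in> \<Delta> \<longleftrightarrow> a \<in> \<Delta> \<and> b \<in> \<Delta>"
  using MP_mem[OF _ axiom_mem[OF Ax4]] MP_mem[OF _ axiom_mem[OF Ax5]]
    MP_mem[OF _ MP_mem[OF _ axiom_mem[OF Ax3]]] by blast

lemma Disj_mem_iff: "Disj a b \<in> \<Delta> \<longleftrightarrow> a \<in> \<Delta> \<or> b \<in> \<Delta>"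
proof
  assume "Disj a b \<in> \<Delta>"
  show "a \<in> \<Delta> \<or> b \<in> \<Delta>"
  proof (rule ccontr)
    assume "\<not> (a \<in> \<Delta> \<or> b \<in> \<Delta>)"
    then have "derives_Cn 1 \<Delta> \<phi>"
      using maximal derives_Cn_DisjE[OF derives_Cn.Hyp[OF \<open>Disj a b \<in> \<Delta>\<close>]] by blast
    with not_derives show False ..
  qed
qed (use MP_mem[OF _ axiom_mem[OF Ax6]] MP_mem[OF _ axiom_mem[OF Ax7]] in blast)

lemma Imp_mem_iff: "Imp a b \<in> \<Delta> \<longleftrightarrow> a \<notin> \<Delta> \<or> b \<in> \<Delta>"
  using Disj_mem_iff derives_mem[OF derives_C1_Disj_Imp] MP_mem MP_mem[OF _ axiom_mem[OF Ax1]]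
  by blast

lemma Neg_mem_if_not_mem: "a \<notin> \<Delta> \<Longrightarrow> Neg a \<in> \<Delta>"
  using Disj_mem_iff axiom_mem[OF Ax9] by blast

lemma mem_if_Neg_Neg_mem: "Neg (Neg a) \<in> \<Delta> \<Longrightarrow> a \<in> \<Delta>"
  using MP_mem[OF _ axiom_mem[OF Ax10]] .

lemma not_mem_Neg_if_consistent:
  assumes "Neg (Conj a (Neg a)) \<in> \<Delta>" "a \<in> \<Delta>"
  shows "Neg a \<notin> \<Delta>"
proof
  assume "Neg a \<in> \<Delta>"
  moreover have "Imp (Neg (Conj a (Neg a))) (Imp a (Imp (Neg a) \<phi>)) \<in> \<Delta>"
    using axiom_mem[OF bc, of a \<phi>] by simp
  ultimately have "\<phi> \<in> \<Delta>" using assms MP_mem by blast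
  then show False using not_derives derives_Cn.Hyp by blast
qed

lemma consistency_mem_binary:
  assumes "Neg (Conj a (Neg a)) \<in> \<Delta>" "Neg (Conj b (Neg b)) \<in> \<Delta>"
  shows "Neg (Conj (Conj a b) (Neg (Conj a b))) \<in> \<Delta>"
    and "Neg (Conj (Disj a b) (Neg (Disj a b))) \<in> \<Delta>"
    and "Neg (Conj (Imp a b) (Neg (Imp a b))) \<in> \<Delta>"
proof -
  have "Imp (Conj (Neg (Conj a (Neg a))) (Neg (Conj b (Neg b))))
      (Conj (Conj (Neg (Conj (Conj a b) (Neg (Conj a b)))) (Neg (Conj (Disj a b) (Neg (Disj a b)))))
        (Neg (Conj (Imp a b) (Neg (Imp a b))))) \<in> \<Delta>"
    using axiom_mem[OF P, of a b] by simp
  with assms show "Neg (Conj (Conj a b) (Neg (Conj a b))) \<in> \<Delta>"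
    and "Neg (Conj (Disj a b) (Neg (Disj a b))) \<in> \<Delta>"
    and "Neg (Conj (Imp a b) (Neg (Imp a b))) \<in> \<Delta>"
    using MP_mem Conj_mem_iff by blast+
qed

end

definition canonical_val :: "fm set \<Rightarrow> fm \<Rightarrow> tv" where
  "canonical_val \<Delta> a = (if a \<notin> \<Delta> then F else if Neg a \<in> \<Delta> then t else T)"

lemma canonical_val_eq_F_iff: "canonical_val \<Delta> a = F \<longleftrightarrow> a \<notin> \<Delta>"
  by (simp add: canonical_val_def)

context saturated
begin

lemma canonical_val_neq_t_iff:
  "canonical_val \<Delta> a \<noteq> t \<longleftrightarrow> Neg (Conj a (Neg a)) \<in> \<Delta>"
proof -
  have "canonical_val \<Delta> a \<noteq> t \<longleftrightarrow> Conj a (Neg a) \<notin> \<Delta>"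
    by (simp add: canonical_val_def Conj_mem_iff)
  also have "\<dots> \<longleftrightarrow> Neg (Conj a (Neg a)) \<in> \<Delta>"
    using Neg_mem_if_not_mem[of "Conj a (Neg a)"] not_mem_Neg_if_consistent[of a]
    by (auto simp: Conj_mem_iff)
  finally show ?thesis .
qed

lemma canonical_val_Neg: "canonical_val \<Delta> (Neg a) \<in> mneg (canonical_val \<Delta> a)"
  using Neg_mem_if_not_mem[of a] mem_if_Neg_Neg_mem[of a]
  by (auto simp: canonical_val_def mem_mneg_iff)

lemma canonical_val_binary:
  fixes a b :: fm
  defines "v \<equiv> canonical_val \<Delta>"
  shows "v (Conj a b) \<in> mconj (v a) (v b)"
    and "v (Disj a b) \<in> mdisj (v a) (v b)"
    and "v (Imp a b) \<in> mimp (v a) (v b)"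
  using consistency_mem_binary[of a b]
  by (simp_all add: v_def mem_multiop_iffs canonical_val_neq_t_iff canonical_val_eq_F_iff
      Conj_mem_iff Disj_mem_iff Imp_mem_iff)

lemma canonical_val_in_F_C1: "canonical_val \<Delta> \<in> F_C1"
proof -
  have "canonical_val \<Delta> (Conj a (Neg a)) = T" if "canonical_val \<Delta> a = t" for a
    using that canonical_val_neq_t_iff[of a]
    by (auto simp: canonical_val_def Conj_mem_iff split: if_splits)
  then show ?thesis
    using canonical_val_Neg canonical_val_binary by (auto simp: F_C1_def valuation_def)
qed

end

text \<open>Lindenbaum's lemma, via Zorn's lemma: derivability has finite character, so the union
  of a chain of sets not deriving \<open>\<phi>\<close> does not derive \<open>\<phi>\<close> either.\<close>
lemma saturated_extension:
  assumes "\<not> derives_Cn 1 \<Gamma> \<phi>"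
  obtains \<Delta> where "\<Gamma> \<subseteq> \<Delta>" "saturated \<Delta> \<phi>"
proof -
  define A where "A = {\<Delta>. \<Gamma> \<subseteq> \<Delta> \<and> \<not> derives_Cn 1 \<Delta> \<phi>}"
  have "\<exists>U\<in>A. \<forall>X\<in>C. X \<subseteq> U" if C: "C \<in> chains A" for C
  proof (cases "C = {}")
    case True
    have "\<Gamma> \<in> A" using assms by (simp add: A_def)
    with True show ?thesis by blast
  next
    case False
    have "C \<subseteq> A" using C by (simp add: chains_def)
    have "\<not> derives_Cn 1 (\<Union>C) \<phi>"
    proof
      assume "derives_Cn 1 (\<Union>C) \<phi>"
      then obtain G where G: "finite G" "G \<subseteq> \<Union>C" "derives_Cn 1 G \<phi>"
        by (auto dest: derives_Cn_finite_premises)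
      moreover have "subset.chain A C" using C by (simp add: chains_alt_def)
      ultimately obtain B where "B \<in> C" "G \<subseteq> B"
        using finite_subset_Union_chain[OF G(1,2) False] by blast
      then have "B \<in> A" "derives_Cn 1 B \<phi>" using \<open>C \<subseteq> A\<close> derives_Cn_mono[OF G(3)] by blast+
      then show False by (simp add: A_def)
    qed
    moreover have "\<Gamma> \<subseteq> \<Union>C" using False \<open>C \<subseteq> A\<close> by (auto simp: A_def)
    ultimately have "\<Union>C \<in> A" by (simp add: A_def)
    then show ?thesis by blast
  qed
  then obtain M where M: "M \<in> A" "\<forall>X\<in>A. M \<subseteq> X \<longrightarrow> X = M"
    using Zorn_Lemma2[of A] by blast
  have "saturated M \<phi>"
  proof
    show "\<not> derives_Cn 1 M \<phi>" using M(1) by (simp add: A_def)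
    fix \<psi> assume "\<psi> \<notin> M"
    then have "insert \<psi> M \<notin> A" using M(2) by blast
    moreover have "\<Gamma> \<subseteq> insert \<psi> M" using M(1) by (auto simp: A_def)
    ultimately show "derives_Cn 1 (insert \<psi> M) \<phi>" by (simp add: A_def)
  qed
  moreover have "\<Gamma> \<subseteq> M" using M(1) by (simp add: A_def)
  ultimately show ?thesis using that by blast
qed

theorem derives_C1_complete:
  assumes "RN_conseq \<Gamma> \<phi>"
  shows "derives_Cn 1 \<Gamma> \<phi>"
proof (rule ccontr)
  assume "\<not> derives_Cn 1 \<Gamma> \<phi>"
  then obtain \<Delta> where "\<Gamma> \<subseteq> \<Delta>" and sat: "saturated \<Delta> \<phi>" by (rule saturated_extension)
  then have "canonical_val \<Delta> ` \<Gamma> \<subseteq> D" "canonical_val \<Delta> \<phi> \<notin> D"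
    using saturated.not_derives[OF sat] derives_Cn.Hyp
    by (auto simp: in_D_iff canonical_val_eq_F_iff)
  then show False
    using assms saturated.canonical_val_in_F_C1[OF sat] by (auto simp: RN_conseq_def)
qed

theorem mainTheorem9:
  fixes \<Gamma> :: "fm set" and \<phi> :: fm
  shows "derives_Cn 1 \<Gamma> \<phi> \<longleftrightarrow> RN_conseq \<Gamma> \<phi>"
  using derives_C1_sound derives_C1_complete by (auto simp: RN_conseq_def)

end
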